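(* Let $d\ge2$ and $\alpha>0$. The map $F_\alpha:\mathbf{Sym}_d^+\to\mathbb{R}^+$, $F_\alpha(A)=(\det A)^\alpha$, is $\Lambda$-concave if and only if $\alpha\le\frac1{d-1}$.
   Context: $\mathbf{Sym}_d^+$ is the cone of real symmetric positive semi-definite $d\times d$ matrices. A function $F:\mathbf{Sym}_d^+\to\mathbb{R}$ is called $\Lambda$-concave if for all $B,C\in\mathbf{Sym}_d^+$ with $\det(C-B)=0$, the restriction of $F$ to the segment $[B,C]$ is concave, i.e. $t\mapsto F((1-t)B+tC)$ is concave on $[0,1]$. *)

theory Defs
  imports "HOL-Analysis.Analysis"
begin

definition psd_sym :: "(real^'n^'n) set" where
  "psd_sym = {A. transpose A = A \<and> (\<forall>x. 0 \<le> x \<bullet> (A *v x))}"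

definition Lambda_concave :: "(real^'n^'n \<Rightarrow> real) \<Rightarrow> bool" where
  "Lambda_concave F \<longleftrightarrow>
     (\<forall>B\<in>psd_sym. \<forall>C\<in>psd_sym. det (C - B) = 0 \<longrightarrow>
        concave_on {0..1} (\<lambda>t::real. F ((1 - t) *\<^sub>R B + t *\<^sub>R C)))"

end

theory Submission
  imports Defs
begin

text \<open>
  If \<open>B\<close> is positive definite and \<open>det (C - B) = 0\<close>, then \<open>B\<close> and \<open>C - B\<close> can be diagonalized
  simultaneously by a congruence, so that along the segment
  \<open>det ((1 - t) B + t C) = c \<Prod>\<^sub>i (1 + \<mu>\<^sub>i t)\<close> with \<open>c > 0\<close>, all factors nonnegative on \<open>[0, 1]\<close>
  and at least one \<open>\<mu>\<^sub>i = 0\<close>. A product of at most \<open>k = d - 1\<close> nonnegative affine functions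
  raised to a power \<open>w \<le> 1/k\<close> is concave (normalise at the intermediate point and apply AM-GM).
  Positive semidefinite \<open>B\<close> is handled by replacing \<open>B, C\<close> with \<open>B + \<epsilon>I, C + \<epsilon>I\<close> and letting
  \<open>\<epsilon> \<rightarrow> 0\<close>. Conversely, from the projection onto \<open>e\<^sub>j\<close> to \<open>I\<close> the determinant is
  \<open>t\<^sup>d\<^sup>-\<^sup>1\<close>, and \<open>t \<mapsto> t\<^bsup>(d-1)\<alpha>\<^esup>\<close> is concave only if \<open>(d - 1) \<alpha> \<le> 1\<close>.
\<close>

section \<open>Diagonalization of real symmetric matrices\<close>

lemma symmetric_matrix_inner_commute:
  fixes A :: "real^'n^'n"
  assumes "transpose A = A"
  shows "(A *v x) \<bullet> y = x \<bullet> (A *v y)"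
  by (metis assms dot_lmul_matrix transpose_matrix_vector)

lemma eq_0_if_linear_le_quadratic:
  fixes c K :: real
  assumes "\<And>e. e * c \<le> e\<^sup>2 * K"
  shows "c = 0"
proof (rule ccontr)
  assume "c \<noteq> 0"
  define e where "e = c / (2 * (\<bar>K\<bar> + 1))"
  have "c = 2 * (\<bar>K\<bar> + 1) * e" by (simp add: e_def add_pos_nonneg)
  hence "e\<^sup>2 * (2 * (\<bar>K\<bar> + 1)) \<le> e\<^sup>2 * K"
    using assms[of e] by (simp add: power2_eq_square mult.commute mult.left_commute)
  moreover have "e\<^sup>2 > 0" using \<open>c \<noteq> 0\<close> by (simp add: e_def add_pos_nonneg)
  ultimately show False by (smt (verit) abs_ge_self mult_le_cancel_left_pos)
qed

lemma rayleigh_maximizer_is_eigenvector: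
  fixes A :: "real^'n^'n"
  assumes sym: "transpose A = A" and S: "subspace S" and inv: "\<And>x. x \<in> S \<Longrightarrow> A *v x \<in> S"
    and v: "v \<in> S" "v \<bullet> v = 1"
    and max: "\<And>x. x \<in> S \<Longrightarrow> x \<bullet> (A *v x) \<le> (v \<bullet> (A *v v)) * (x \<bullet> x)"
  shows "A *v v = (v \<bullet> (A *v v)) *\<^sub>R v"
proof -
  let ?q = "\<lambda>x. x \<bullet> (A *v x)"
  have orth: "w \<bullet> (A *v v) = 0" if "w \<in> S" "w \<bullet> v = 0" for w
  proof -
    have "2 * (w \<bullet> (A *v v)) = 0"
    proof (rule eq_0_if_linear_le_quadratic[where K = "?q v * (w \<bullet> w) - ?q w"])
      fix e :: real
      have ineq: "?q (v + e *\<^sub>R w) \<le> ?q v * ((v + e *\<^sub>R w) \<bullet> (v + e *\<^sub>R w))"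
        using v(1) that(1) S by (intro max) (simp add: subspace_add subspace_scale)
      have "v \<bullet> (A *v w) = w \<bullet> (A *v v)"
        using symmetric_matrix_inner_commute[OF sym, of v w] by (simp add: inner_commute)
      then have q: "?q (v + e *\<^sub>R w) = ?q v + e * (2 * (w \<bullet> (A *v v))) + e\<^sup>2 * ?q w"
        by (simp add: power2_eq_square algebra_simps)
      have n: "(v + e *\<^sub>R w) \<bullet> (v + e *\<^sub>R w) = 1 + e\<^sup>2 * (w \<bullet> w)"
        using v(2) that(2) by (simp add: inner_add_left inner_add_right inner_commute power2_eq_square)
      show "e * (2 * (w \<bullet> (A *v v))) \<le> e\<^sup>2 * (?q v * (w \<bullet> w) - ?q w)"
        using ineq unfolding q n by (simp add: algebra_simps)
    qed
    then show ?thesis by simp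
  qed
  define u where "u = A *v v - ?q v *\<^sub>R v"
  have "u \<in> S" using inv[OF v(1)] v(1) S by (simp add: u_def subspace_diff subspace_scale)
  moreover have "u \<bullet> v = 0" using v(2) by (simp add: u_def inner_diff_left inner_commute[of "A *v v"])
  ultimately have "u \<bullet> u = 0" using orth by (simp add: u_def inner_diff_right)
  then show ?thesis by (simp add: u_def)
qed

lemma symmetric_matrix_eigenvector_in_invariant_subspace:
  fixes A :: "real^'n^'n"
  assumes sym: "transpose A = A" and S: "subspace S" "S \<noteq> {0}"
    and inv: "\<And>x. x \<in> S \<Longrightarrow> A *v x \<in> S"
  obtains v l where "v \<in> S" "norm v = 1" "A *v v = l *\<^sub>R v"
proof -
  let ?q = "\<lambda>x. x \<bullet> (A *v x)"
  have cpt: "compact (S \<inter> sphere 0 1)"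
    by (simp add: closed_subspace S(1) closed_Int_compact)
  obtain y where "y \<in> S" "y \<noteq> 0" using S subspace_0 by blast
  then have "(1 / norm y) *\<^sub>R y \<in> S \<inter> sphere 0 1" using S(1) by (simp add: subspace_scale)
  then have nonempty: "S \<inter> sphere 0 1 \<noteq> {}" by blast
  have "continuous_on (S \<inter> sphere 0 1) ?q"
    by (intro continuous_intros linear_continuous_on matrix_vector_mul_linear)
  then obtain v where "v \<in> S \<inter> sphere 0 1"
    and vmax: "\<And>x. x \<in> S \<inter> sphere 0 1 \<Longrightarrow> ?q x \<le> ?q v"
    using continuous_attains_sup[OF cpt nonempty] by blast
  then have v: "v \<in> S" "norm v = 1" by auto
  have "?q x \<le> ?q v * (x \<bullet> x)" if "x \<in> S" for x
  proof (cases "x = 0")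
    case False
    have le: "?q ((1 / norm x) *\<^sub>R x) \<le> ?q v"
      using that False S(1) by (intro vmax) (simp add: subspace_scale)
    have "?q ((1 / norm x) *\<^sub>R x) = ?q x / (x \<bullet> x)"
      by (simp add: matrix_vector_mult_scaleR dot_square_norm power2_eq_square)
    with le have "?q x / (x \<bullet> x) \<le> ?q v" by argo
    moreover have "x \<bullet> x > 0" using False by simp
    ultimately show ?thesis by (simp add: divide_le_eq mult.commute)
  qed simp
  moreover have "v \<bullet> v = 1" using v(2) by (simp add: dot_square_norm)
  ultimately have "A *v v = ?q v *\<^sub>R v"
    using rayleigh_maximizer_is_eigenvector[OF sym S(1) inv v(1)] by blast
  with v that show ?thesis by blast
qed

lemma symmetric_matrix_orthonormal_eigenvectors:
  fixes A :: "real^'n^'n"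
  assumes sym: "transpose A = A"
  shows "subspace S \<Longrightarrow> (\<And>x. x \<in> S \<Longrightarrow> A *v x \<in> S) \<Longrightarrow>
    \<exists>E. finite E \<and> card E = dim S \<and> E \<subseteq> S \<and> pairwise orthogonal E \<and>
      (\<forall>x\<in>E. norm x = 1 \<and> (\<exists>l. A *v x = l *\<^sub>R x))"
proof (induction "dim S" arbitrary: S)
  case 0
  then show ?case by (intro exI[of _ "{}"]) auto
next
  case (Suc k)
  then have "S \<noteq> {0}" by auto
  with Suc.prems obtain v l where v: "v \<in> S" "norm v = 1" "A *v v = l *\<^sub>R v"
    by (metis symmetric_matrix_eigenvector_in_invariant_subspace[OF sym])
  define S' where "S' = {y \<in> S. orthogonal v y}"
  have sub': "subspace S'"
    unfolding S'_def orthogonal_def using Suc.prems(1) by (auto simp: subspace_def inner_add_right)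
  have inv': "A *v x \<in> S'" if "x \<in> S'" for x
  proof -
    have "v \<bullet> (A *v x) = l * (v \<bullet> x)"
      using symmetric_matrix_inner_commute[OF sym, of v x] v(3) by simp
    then show ?thesis using that Suc.prems(2) unfolding S'_def orthogonal_def by auto
  qed
  have "S' = {y \<in> S. \<forall>x \<in> span {v}. orthogonal x y}"
    unfolding S'_def by (auto simp: span_singleton orthogonal_def)
  then have "dim S' + dim (span {v}) = dim S"
    using dim_subspace_orthogonal_to_vectors[of "span {v}" S] Suc.prems(1) v(1)
    by (simp add: span_minimal)
  moreover have "dim (span {v}) = 1" using v(2) by auto
  ultimately have "dim S' = k" using Suc.hyps(2) by simp
  then obtain E where E: "finite E" "card E = k" "E \<subseteq> S'" "pairwise orthogonal E"
    "\<forall>x\<in>E. norm x = 1 \<and> (\<exists>l. A *v x = l *\<^sub>R x)"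
    using Suc.hyps(1)[OF _ sub' inv'] by metis
  have "v \<notin> E" using E(3) v(2) by (auto simp: S'_def orthogonal_def)
  then show ?case
    using E v Suc.hyps(2) unfolding S'_def
    by (intro exI[of _ "insert v E"]) (auto simp: pairwise_insert orthogonal_commute)
qed

definition diag_mat :: "('n::finite \<Rightarrow> real) \<Rightarrow> real^'n^'n" where
  "diag_mat f = (\<chi> i j. if i = j then f i else 0)"

lemma symmetric_matrix_diagonalizable:
  fixes A :: "real^'n^'n"
  assumes sym: "transpose A = A"
  obtains Q \<mu> where "orthogonal_matrix Q" "transpose Q ** A ** Q = diag_mat \<mu>"
proof -
  obtain E where E: "finite E" "card E = CARD('n)" "pairwise orthogonal E"
     "\<forall>x\<in>E. norm x = 1 \<and> (\<exists>l. A *v x = l *\<^sub>R x)"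
    using symmetric_matrix_orthonormal_eigenvectors[OF sym, of UNIV] by auto
  obtain h where h: "bij_betw h (UNIV::'n set) E"
    using finite_same_card_bij[of "UNIV::'n set" E] E by auto
  then have hE: "h i \<in> E" for i by (auto simp: bij_betw_def)
  have orth: "h i \<bullet> h j = (if i = j then 1 else 0)" for i j
  proof (cases "i = j")
    case True then show ?thesis using E(4) hE[of i] by (simp add: dot_square_norm)
  next
    case False
    then have "h i \<noteq> h j" using h by (auto simp: bij_betw_def inj_on_def)
    then show ?thesis using E(3) hE False by (simp add: pairwise_def orthogonal_def)
  qed
  define \<mu> where "\<mu> i = h i \<bullet> (A *v h i)" for i
  have eig: "A *v h i = \<mu> i *\<^sub>R h i" for i
  proof -
    obtain l where l: "A *v h i = l *\<^sub>R h i" using E(4) hE[of i] by blast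
    then have "\<mu> i = l" using orth[of i i] by (simp add: \<mu>_def)
    then show ?thesis using l by simp
  qed
  define Q :: "real^'n^'n" where "Q = (\<chi> r c. h c $ r)"
  have QQ: "transpose Q ** Q = mat 1"
    by (simp add: Q_def matrix_matrix_mult_def transpose_def mat_def vec_eq_iff
        orth[unfolded inner_vec_def, simplified] inner_vec_def)
  have "A ** Q = Q ** diag_mat \<mu>"
    by (simp add: Q_def diag_mat_def matrix_matrix_mult_def vec_eq_iff if_distrib
        eig[unfolded matrix_vector_mult_def vec_eq_iff, simplified] cong: if_cong)
  then have "transpose Q ** A ** Q = diag_mat \<mu>"
    by (metis QQ matrix_mul_assoc matrix_mul_lid)
  with QQ show ?thesis using that by (simp add: orthogonal_matrix)
qed

lemma transpose_diag_mat: "transpose (diag_mat f) = diag_mat f"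
  by (simp add: diag_mat_def transpose_def vec_eq_iff)

lemma sum_if_eq_mult:
  fixes i :: "'n::finite" and a :: real
  shows "(\<Sum>k\<in>UNIV. (if i = k then a else 0) * b k) = a * b i"
proof -
  have "(\<Sum>k\<in>UNIV. (if i = k then a else 0) * b k) = (\<Sum>k\<in>UNIV. if i = k then a * b k else 0)"
    by (rule sum.cong) auto
  then show ?thesis by simp
qed

lemma diag_mat_mult: "diag_mat f ** diag_mat g = diag_mat (\<lambda>i. f i * g i)"
  by (simp add: diag_mat_def matrix_matrix_mult_def vec_eq_iff sum_if_eq_mult)

lemma diag_mat_mult_vector: "diag_mat f *v x = (\<chi> i. f i * x $ i)"
  by (simp add: diag_mat_def matrix_vector_mult_def vec_eq_iff sum_if_eq_mult)

lemma inner_diag_mat: "x \<bullet> (diag_mat f *v x) = (\<Sum>i\<in>UNIV. f i * (x $ i)\<^sup>2)"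
  by (simp add: diag_mat_mult_vector inner_vec_def power2_eq_square mult_ac)

lemma inner_diag_mat_axis: "axis i 1 \<bullet> (diag_mat f *v axis i 1) = f i"
  by (simp add: diag_mat_mult_vector inner_axis')

lemma mat_1_eq_diag_mat: "mat 1 = diag_mat (\<lambda>_. 1)"
  by (simp add: diag_mat_def mat_def vec_eq_iff)

lemma diag_mat_add_scaleR: "diag_mat f + t *\<^sub>R diag_mat g = diag_mat (\<lambda>i. f i + t * g i)"
  by (simp add: diag_mat_def vec_eq_iff)

lemma det_diag_mat: "det (diag_mat f) = (\<Prod>i\<in>UNIV. f i)"
  by (subst det_diagonal) (auto simp: diag_mat_def)

lemma matrix_add_rdistrib: "(A + B) ** C = A ** C + B ** (C :: 'a::semiring_1^'n^'n)"
  by (simp add: matrix_matrix_mult_def vec_eq_iff distrib_right sum.distrib)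

lemma inner_congruence:
  fixes P X :: "real^'n^'n"
  shows "x \<bullet> ((transpose P ** X ** P) *v x) = (P *v x) \<bullet> (X *v (P *v x))"
  by (metis dot_lmul_matrix matrix_vector_mul_assoc vector_transpose_matrix)

lemma congruence_add_scaleR:
  fixes P X Y :: "real^'n^'n"
  shows "transpose P ** (X + t *\<^sub>R Y) ** P = transpose P ** X ** P + t *\<^sub>R (transpose P ** Y ** P)"
  by (simp add: matrix_add_ldistrib matrix_add_rdistrib matrix_scalar_ac scalar_matrix_assoc)

lemma pos_def_congruent_to_mat_1:
  fixes B :: "real^'n^'n"
  assumes sym: "transpose B = B" and pos_def: "\<And>x. x \<noteq> 0 \<Longrightarrow> 0 < x \<bullet> (B *v x)"
  obtains P :: "real^'n^'n" where "transpose P ** B ** P = mat 1"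
proof -
  obtain Q d where Q: "orthogonal_matrix Q" and QB: "transpose Q ** B ** Q = diag_mat d"
    using symmetric_matrix_diagonalizable[OF sym] by blast
  have "d i > 0" for i
  proof -
    have "transpose Q *v (Q *v axis i 1) = axis i 1"
      using Q by (simp add: orthogonal_matrix matrix_vector_mul_assoc)
    then have "Q *v axis i 1 \<noteq> 0" by auto
    moreover have "d i = (Q *v axis i 1) \<bullet> (B *v (Q *v axis i 1))"
      using inner_congruence[of "axis i 1" Q B] by (simp add: QB inner_diag_mat_axis)
    ultimately show ?thesis using pos_def by simp
  qed
  define S where "S = diag_mat (\<lambda>i. 1 / sqrt (d i))"
  have "1 / sqrt (d i) * d i * (1 / sqrt (d i)) = 1" for i
  proof -
    have "sqrt (d i) * sqrt (d i) = d i" using \<open>d i > 0\<close> by simp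
    with \<open>d i > 0\<close> show ?thesis by (simp add: field_simps)
  qed
  then have "S ** diag_mat d ** S = mat 1"
    by (simp add: S_def diag_mat_mult mat_1_eq_diag_mat)
  moreover have "transpose (Q ** S) ** B ** (Q ** S) = S ** (transpose Q ** B ** Q) ** S"
    by (simp add: S_def matrix_transpose_mul transpose_diag_mat matrix_mul_assoc)
  ultimately show ?thesis using that QB by metis
qed

lemma simultaneous_diagonalization:
  fixes B M :: "real^'n^'n"
  assumes "transpose B = B" "\<And>x. x \<noteq> 0 \<Longrightarrow> 0 < x \<bullet> (B *v x)" and "transpose M = M"
  obtains G :: "real^'n^'n" and \<mu> where "transpose G ** B ** G = mat 1" "transpose G ** M ** G = diag_mat \<mu>"
proof -
  obtain P :: "real^'n^'n" where P: "transpose P ** B ** P = mat 1"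
    using pos_def_congruent_to_mat_1 assms(1,2) by blast
  have "transpose (transpose P ** M ** P) = transpose P ** M ** P"
    by (simp add: matrix_transpose_mul assms(3) matrix_mul_assoc)
  then obtain R \<mu> where R: "orthogonal_matrix R" "transpose R ** (transpose P ** M ** P) ** R = diag_mat \<mu>"
    using symmetric_matrix_diagonalizable by blast
  have "transpose (P ** R) ** X ** (P ** R) = transpose R ** (transpose P ** X ** P) ** R" for X
    by (simp add: matrix_transpose_mul matrix_mul_assoc)
  then have "transpose (P ** R) ** B ** (P ** R) = mat 1" "transpose (P ** R) ** M ** (P ** R) = diag_mat \<mu>"
    using P R by (simp_all add: orthogonal_matrix)
  then show ?thesis using that by blast
qed

section \<open>Positive semidefinite matrices\<close>

lemma inner_add_scaleR_mat_1:
  fixes A :: "real^'n^'n"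
  shows "x \<bullet> ((A + e *\<^sub>R mat 1) *v x) = x \<bullet> (A *v x) + e * (x \<bullet> x)"
  by (simp add: matrix_vector_mult_add_rdistrib inner_add_right flip: scaleR_matrix_vector_assoc)

lemma psd_sym_add_scaleR_mat_1:
  assumes "A \<in> psd_sym" "0 \<le> e"
  shows "A + e *\<^sub>R mat 1 \<in> psd_sym"
proof -
  have "transpose (A + e *\<^sub>R mat 1) = A + e *\<^sub>R mat 1"
    using assms(1) by (simp add: psd_sym_def vec_eq_iff transpose_def mat_def)
  then show ?thesis
    using assms by (simp add: psd_sym_def inner_add_scaleR_mat_1)
qed

lemma psd_sym_convex_comb:
  assumes "B \<in> psd_sym" "C \<in> psd_sym" "0 \<le> t" "t \<le> 1"
  shows "(1 - t) *\<^sub>R B + t *\<^sub>R C \<in> psd_sym"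
proof -
  have "x \<bullet> (((1 - t) *\<^sub>R B + t *\<^sub>R C) *v x) = (1 - t) * (x \<bullet> (B *v x)) + t * (x \<bullet> (C *v x))" for x
    by (simp add: matrix_vector_mult_add_rdistrib inner_add_right flip: scaleR_matrix_vector_assoc)
  with assms show ?thesis
    by (auto simp: psd_sym_def vec_eq_iff transpose_def)
qed

lemma det_nonneg_if_psd_sym:
  assumes "A \<in> psd_sym"
  shows "0 \<le> det A"
proof -
  obtain Q d where Q: "orthogonal_matrix Q" and QA: "transpose Q ** A ** Q = diag_mat d"
    using symmetric_matrix_diagonalizable assms unfolding psd_sym_def by blast
  have "d i = (Q *v axis i 1) \<bullet> (A *v (Q *v axis i 1))" for i
    using inner_congruence[of "axis i 1" Q A] by (simp add: QA inner_diag_mat_axis)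
  then have d_nonneg: "0 \<le> d i" for i using assms by (simp add: psd_sym_def)
  have "det Q * det Q = 1" using det_orthogonal_matrix[OF Q] by auto
  then have "det A = det (diag_mat d)" by (simp add: det_mul flip: QA)
  with d_nonneg show ?thesis by (simp add: det_diag_mat prod_nonneg)
qed

lemma diag_mat_psd_sym:
  assumes "\<And>i. 0 \<le> f i"
  shows "diag_mat f \<in> psd_sym"
  using assms by (simp add: psd_sym_def transpose_diag_mat inner_diag_mat sum_nonneg)

section \<open>Concave powers of products of affine functions\<close>

lemma powr_le_affine:
  fixes x p :: real
  assumes "0 \<le> x" "0 \<le> p" "p \<le> 1"
  shows "x powr p \<le> p * x + (1 - p)"
proof (cases "x = 0")
  case False
  then show ?thesis using Youngs_inequality_0[of p "1 - p" x 1] assms by simp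
qed (use assms in simp)

lemma powr_prod_le_sum:
  fixes x :: "'a \<Rightarrow> real" and w :: real
  assumes "finite K" "\<And>i. i \<in> K \<Longrightarrow> 0 \<le> x i" "0 \<le> w" "card K * w \<le> 1"
  shows "(\<Prod>i\<in>K. x i) powr w \<le> w * (\<Sum>i\<in>K. x i) + (1 - card K * w)"
proof (cases "K = {}")
  case False
  define k where "k = real (card K)"
  have "k > 0" using False assms(1) by (simp add: k_def card_gt_0_iff)
  have "(\<Prod>i\<in>K. x i) powr w = ((\<Prod>i\<in>K. x i) powr (1 / k)) powr (k * w)"
    using \<open>k > 0\<close> by (simp add: powr_powr)
  also have "\<dots> \<le> (k * w) * (\<Prod>i\<in>K. x i) powr (1 / k) + (1 - k * w)"
    using \<open>k > 0\<close> assms(3,4) by (intro powr_le_affine) (auto simp: k_def)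
  also have "\<dots> \<le> (k * w) * (\<Sum>i\<in>K. x i / k) + (1 - k * w)"
    using arith_geom_mean[OF assms(1) False assms(2)] \<open>k > 0\<close> assms(3)
    by (simp add: k_def mult_left_mono)
  also have "(k * w) * (\<Sum>i\<in>K. x i / k) = w * (\<Sum>i\<in>K. x i)"
    using \<open>k > 0\<close> by (simp add: sum_divide_distrib[symmetric])
  finally show ?thesis by (simp add: k_def)
qed simp

lemma convex_comb_powr_prod_le_1:
  fixes p q :: "'a \<Rightarrow> real" and w t :: real
  assumes K: "finite K" "card K * w \<le> 1" and "0 \<le> w" "0 \<le> t" "t \<le> 1"
    and nonneg: "\<And>i. i \<in> K \<Longrightarrow> 0 \<le> p i" "\<And>i. i \<in> K \<Longrightarrow> 0 \<le> q i"
    and comb: "\<And>i. i \<in> K \<Longrightarrow> (1 - t) * p i + t * q i = 1"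
  shows "(1 - t) * (\<Prod>i\<in>K. p i) powr w + t * (\<Prod>i\<in>K. q i) powr w \<le> 1"
proof -
  have "(1 - t) * (\<Prod>i\<in>K. p i) powr w + t * (\<Prod>i\<in>K. q i) powr w
     \<le> (1 - t) * (w * (\<Sum>i\<in>K. p i) + (1 - card K * w)) + t * (w * (\<Sum>i\<in>K. q i) + (1 - card K * w))"
    using assms by (intro add_mono mult_left_mono powr_prod_le_sum) auto
  also have "\<dots> = w * ((1 - t) * (\<Sum>i\<in>K. p i) + t * (\<Sum>i\<in>K. q i)) + (1 - card K * w)"
    by (simp add: algebra_simps)
  also have "(1 - t) * (\<Sum>i\<in>K. p i) + t * (\<Sum>i\<in>K. q i) = card K"
    using comb by (simp add: sum_distrib_left flip: sum.distrib)
  finally show ?thesis by simp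
qed

lemma concave_on_powr_prod_affine:
  fixes a b :: "'a \<Rightarrow> real" and w :: real
  assumes K: "finite K" "card K * w \<le> 1" and "0 \<le> w" and "convex S"
    and nonneg: "\<And>s i. s \<in> S \<Longrightarrow> i \<in> K \<Longrightarrow> 0 \<le> a i + b i * s"
  shows "concave_on S (\<lambda>s. (\<Prod>i\<in>K. a i + b i * s) powr w)"
proof (rule concave_on_linorderI)
  fix t x y :: real
  assume t: "0 < t" "t < 1" and xy: "x \<in> S" "y \<in> S"
  define z where "z = (1 - t) * x + t * y"
  have "z \<in> S" using \<open>convex S\<close> xy t by (simp add: z_def convex_alt)
  have split: "a i + b i * z = (1 - t) * (a i + b i * x) + t * (a i + b i * y)" for i
    by (simp add: z_def algebra_simps)
  show "(1 - t) * (\<Prod>i\<in>K. a i + b i * x) powr w + t * (\<Prod>i\<in>K. a i + b i * y) powr w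
        \<le> (\<Prod>i\<in>K. a i + b i * ((1 - t) *\<^sub>R x + t *\<^sub>R y)) powr w"
  proof (cases "\<exists>i\<in>K. a i + b i * z = 0")
    case True
    then obtain i where i: "i \<in> K" "a i + b i * z = 0" by blast
    with split[of i] nonneg[OF xy(1) i(1)] nonneg[OF xy(2) i(1)] t
    have "a i + b i * x = 0" "a i + b i * y = 0"
      by (smt (verit) mult_pos_pos mult_nonneg_nonneg)+
    then have "(\<Prod>i\<in>K. a i + b i * x) = 0" "(\<Prod>i\<in>K. a i + b i * y) = 0"
      using i K by (auto intro: prod_zero)
    then show ?thesis by simp
  next
    case False
    with nonneg[OF \<open>z \<in> S\<close>] have pos: "0 < a i + b i * z" if "i \<in> K" for i
      using that by force
    define p where "p i = (a i + b i * x) / (a i + b i * z)" for i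
    define q where "q i = (a i + b i * y) / (a i + b i * z)" for i
    have normalized: "(1 - t) * (\<Prod>i\<in>K. p i) powr w + t * (\<Prod>i\<in>K. q i) powr w \<le> 1"
    proof (rule convex_comb_powr_prod_le_1)
      fix i assume "i \<in> K"
      have "(1 - t) * (X / Z) + t * (Y / Z) = ((1 - t) * X + t * Y) / Z" for X Y Z :: real
        by (simp add: add_divide_distrib)
      then have "(1 - t) * p i + t * q i = ((1 - t) * (a i + b i * x) + t * (a i + b i * y)) / (a i + b i * z)"
        unfolding p_def q_def by blast
      then show "(1 - t) * p i + t * q i = 1"
        using pos[OF \<open>i \<in> K\<close>] by (simp flip: split)
    qed (use assms t xy pos in \<open>auto simp: p_def q_def less_imp_le\<close>)
    have "(a i + b i * z) * p i = a i + b i * x" "(a i + b i * z) * q i = a i + b i * y"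
      if "i \<in> K" for i
      using pos[OF that] by (simp_all add: p_def q_def)
    then have prods: "(\<Prod>i\<in>K. a i + b i * x) = (\<Prod>i\<in>K. a i + b i * z) * (\<Prod>i\<in>K. p i)"
      "(\<Prod>i\<in>K. a i + b i * y) = (\<Prod>i\<in>K. a i + b i * z) * (\<Prod>i\<in>K. q i)"
      by (simp_all add: prod.distrib[symmetric])
    define H where "H = (\<Prod>i\<in>K. a i + b i * z) powr w"
    have "(1 - t) * (\<Prod>i\<in>K. a i + b i * x) powr w + t * (\<Prod>i\<in>K. a i + b i * y) powr w
        = H * ((1 - t) * (\<Prod>i\<in>K. p i) powr w + t * (\<Prod>i\<in>K. q i) powr w)"
      unfolding prods powr_mult H_def by (simp add: algebra_simps)
    also have "\<dots> \<le> H" using normalized by (simp add: H_def mult_left_le)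
    finally show ?thesis by (simp add: H_def z_def)
  qed
qed (use \<open>convex S\<close> in simp)

section \<open>Lambda-concavity of powers of the determinant\<close>

lemma concave_on_tendsto:
  fixes f :: "'b \<Rightarrow> 'a::real_vector \<Rightarrow> real"
  assumes "F \<noteq> bot" "convex S" and conc: "eventually (\<lambda>n. concave_on S (f n)) F"
    and lim: "\<And>x. x \<in> S \<Longrightarrow> ((\<lambda>n. f n x) \<longlongrightarrow> g x) F"
  shows "concave_on S g"
  unfolding concave_on_iff
proof (intro conjI \<open>convex S\<close> ballI allI impI)
  fix x y and u v :: real
  assume xy: "x \<in> S" "y \<in> S" and uv: "0 \<le> u" "0 \<le> v" "u + v = 1"
  then have "u *\<^sub>R x + v *\<^sub>R y \<in> S" using \<open>convex S\<close> by (simp add: convex_def)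
  show "u * g x + v * g y \<le> g (u *\<^sub>R x + v *\<^sub>R y)"
  proof (rule tendsto_le[OF \<open>F \<noteq> bot\<close>])
    show "((\<lambda>n. f n (u *\<^sub>R x + v *\<^sub>R y)) \<longlongrightarrow> g (u *\<^sub>R x + v *\<^sub>R y)) F"
      by (rule lim) fact
    show "((\<lambda>n. u * f n x + v * f n y) \<longlongrightarrow> u * g x + v * g y) F"
      by (intro tendsto_intros lim xy)
    show "eventually (\<lambda>n. u * f n x + v * f n y \<le> f n (u *\<^sub>R x + v *\<^sub>R y)) F"
      using conc by eventually_elim (use xy uv in \<open>auto simp: concave_on_iff\<close>)
  qed
qed

lemma tendsto_det:
  fixes X :: "'b \<Rightarrow> real^'n^'n"
  assumes "(X \<longlongrightarrow> A) F"
  shows "((\<lambda>n. det (X n)) \<longlongrightarrow> det A) F"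
  unfolding det_def by (intro tendsto_intros tendsto_vec_nth assms)

lemma det_segment_eq_prod:
  fixes B C :: "real^'n^'n"
  assumes B: "B \<in> psd_sym" and pos_def: "\<And>x. x \<noteq> 0 \<Longrightarrow> 0 < x \<bullet> (B *v x)"
    and C: "C \<in> psd_sym" and singular: "det (C - B) = 0"
  obtains c and \<mu> :: "'n \<Rightarrow> real" where "0 < c" "\<exists>j. \<mu> j = 0" "\<And>t i. t \<in> {0..1} \<Longrightarrow> 0 \<le> 1 + \<mu> i * t"
    "\<And>t. det ((1 - t) *\<^sub>R B + t *\<^sub>R C) = c * (\<Prod>i\<in>UNIV. 1 + \<mu> i * t)"
proof -
  have "transpose B = B" "transpose (C - B) = C - B"
    using B C by (auto simp: psd_sym_def vec_eq_iff transpose_def)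
  then obtain G :: "real^'n^'n" and \<mu> where GB: "transpose G ** B ** G = mat 1"
    and GM: "transpose G ** (C - B) ** G = diag_mat \<mu>"
    using simultaneous_diagonalization[OF \<open>transpose B = B\<close> pos_def \<open>transpose (C - B) = C - B\<close>]
    by blast
  have diag: "transpose G ** ((1 - t) *\<^sub>R B + t *\<^sub>R C) ** G = diag_mat (\<lambda>i. 1 + \<mu> i * t)" for t
  proof -
    have "(1 - t) *\<^sub>R B + t *\<^sub>R C = B + t *\<^sub>R (C - B)" by (simp add: algebra_simps)
    then show ?thesis
      by (simp add: congruence_add_scaleR GB GM mat_1_eq_diag_mat diag_mat_add_scaleR mult.commute)
  qed
  have det_G: "det G * det G * det M = det (transpose G ** M ** G)" for M :: "real^'n^'n"
    by (simp add: det_mul)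
  from det_G[of B] have "det G * det G * det B = 1" by (simp add: GB)
  then have "det G \<noteq> 0" by auto
  then have "0 < det G * det G" by (metis not_real_square_gt_zero)
  show ?thesis
  proof (rule that[of "1 / (det G * det G)" \<mu>])
    show "0 < 1 / (det G * det G)" using \<open>0 < det G * det G\<close> by simp
    show "det ((1 - t) *\<^sub>R B + t *\<^sub>R C) = 1 / (det G * det G) * (\<Prod>i\<in>UNIV. 1 + \<mu> i * t)" for t
    proof -
      have "det G * det G * det ((1 - t) *\<^sub>R B + t *\<^sub>R C) = (\<Prod>i\<in>UNIV. 1 + \<mu> i * t)"
        by (simp only: det_G diag det_diag_mat)
      with \<open>det G \<noteq> 0\<close> show ?thesis by (simp add: field_simps)
    qed
    have "(\<Prod>i\<in>UNIV. \<mu> i) = 0"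
      using det_G[of "C - B"] by (simp add: GM det_diag_mat singular)
    then show "\<exists>j. \<mu> j = 0" by simp
    fix t :: real and i assume "t \<in> {0..1}"
    then have "0 \<le> (G *v axis i 1) \<bullet> (((1 - t) *\<^sub>R B + t *\<^sub>R C) *v (G *v axis i 1))"
      using psd_sym_convex_comb[OF B C] by (simp add: psd_sym_def)
    also have "\<dots> = axis i 1 \<bullet> ((transpose G ** ((1 - t) *\<^sub>R B + t *\<^sub>R C) ** G) *v axis i 1)"
      by (rule inner_congruence[symmetric])
    also have "\<dots> = 1 + \<mu> i * t"
      by (simp only: diag inner_diag_mat_axis)
    finally show "0 \<le> 1 + \<mu> i * t" .
  qed
qed

lemma concave_on_det_powr_segment:
  fixes B C :: "real^'n^'n" and \<alpha> :: real
  assumes B: "B \<in> psd_sym" and pos_def: "\<And>x. x \<noteq> 0 \<Longrightarrow> 0 < x \<bullet> (B *v x)"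
    and C: "C \<in> psd_sym" and singular: "det (C - B) = 0"
    and "0 \<le> \<alpha>" and \<alpha>_le: "\<alpha> * (real CARD('n) - 1) \<le> 1"
  shows "concave_on {0..1} (\<lambda>t. det ((1 - t) *\<^sub>R B + t *\<^sub>R C) powr \<alpha>)"
proof -
  obtain c and \<mu> :: "'n \<Rightarrow> real" where "0 < c" and "\<exists>j. \<mu> j = 0"
    and nonneg: "\<And>t i. t \<in> {0..1} \<Longrightarrow> 0 \<le> 1 + \<mu> i * t"
    and det_eq: "\<And>t. det ((1 - t) *\<^sub>R B + t *\<^sub>R C) = c * (\<Prod>i\<in>UNIV. 1 + \<mu> i * t)"
    using det_segment_eq_prod[OF B pos_def C singular] by blast
  from \<open>\<exists>j. \<mu> j = 0\<close> obtain j where "\<mu> j = 0" ..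
  define K where "K = {i. \<mu> i \<noteq> 0}"
  have "K \<subset> UNIV" using \<open>\<mu> j = 0\<close> by (auto simp: K_def)
  then have "Suc (card K) \<le> CARD('n)" by (simp add: Suc_leI psubset_card_mono)
  then have "real (card K) \<le> real CARD('n) - 1" by linarith
  then have "card K * \<alpha> \<le> (real CARD('n) - 1) * \<alpha>"
    using \<open>0 \<le> \<alpha>\<close> by (rule mult_right_mono)
  with \<alpha>_le have "card K * \<alpha> \<le> 1" by (simp add: mult.commute)
  have "concave_on {0..1} (\<lambda>t. c powr \<alpha> * (\<Prod>i\<in>K. 1 + \<mu> i * t) powr \<alpha>)"
    using nonneg \<open>card K * \<alpha> \<le> 1\<close> \<open>0 \<le> \<alpha>\<close>
    by (intro concave_on_cmul concave_on_powr_prod_affine) auto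
  moreover have "(\<Prod>i\<in>UNIV. 1 + \<mu> i * t) = (\<Prod>i\<in>K. 1 + \<mu> i * t)" for t
    by (rule prod.mono_neutral_right) (auto simp: K_def)
  ultimately show ?thesis
    using \<open>0 < c\<close> by (simp add: det_eq powr_mult)
qed

lemma Lambda_concave_det_powr:
  fixes \<alpha> :: real
  assumes "0 < \<alpha>" and \<alpha>_le: "\<alpha> * (real CARD('n) - 1) \<le> 1"
  shows "Lambda_concave (\<lambda>A::real^'n^'n. det A powr \<alpha>)"
  unfolding Lambda_concave_def
proof (intro ballI impI)
  fix B C :: "real^'n^'n"
  assume B: "B \<in> psd_sym" and C: "C \<in> psd_sym" and singular: "det (C - B) = 0"
  define path where "path e t = (1 - t) *\<^sub>R (B + e *\<^sub>R mat 1) + t *\<^sub>R (C + e *\<^sub>R mat 1)" for e t :: real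
  have path_0: "path 0 t = (1 - t) *\<^sub>R B + t *\<^sub>R C" for t by (simp add: path_def)
  show "concave_on {0..1} (\<lambda>t. det ((1 - t) *\<^sub>R B + t *\<^sub>R C) powr \<alpha>)"
    unfolding path_0[symmetric]
  proof (rule concave_on_tendsto[where F = "at_right 0"])
    show "\<forall>\<^sub>F e in at_right 0. concave_on {0..1} (\<lambda>t. det (path e t) powr \<alpha>)"
    proof (rule eventually_at_rightI[of 0 1], unfold path_def)
      fix e :: real assume "e \<in> {0<..<1}"
      then show "concave_on {0..1} (\<lambda>t. det ((1 - t) *\<^sub>R (B + e *\<^sub>R mat 1) + t *\<^sub>R (C + e *\<^sub>R mat 1)) powr \<alpha>)"
        using \<open>0 < \<alpha>\<close> \<alpha>_le singular B C
        by (intro concave_on_det_powr_segment psd_sym_add_scaleR_mat_1)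
          (auto simp: inner_add_scaleR_mat_1 psd_sym_def add_nonneg_pos)
    qed simp
    fix t :: real assume "t \<in> {0..1}"
    have "((\<lambda>e. path e t) \<longlongrightarrow> path 0 t) (at_right 0)"
      unfolding path_def by (intro tendsto_intros)
    moreover have "\<forall>\<^sub>F e in at_right 0. 0 \<le> det (path e t)"
      using eventually_at_right_less[of 0] by eventually_elim
        (use \<open>t \<in> {0..1}\<close> B C in
          \<open>auto simp: path_def intro!: det_nonneg_if_psd_sym psd_sym_convex_comb psd_sym_add_scaleR_mat_1\<close>)
    ultimately show "((\<lambda>e. det (path e t) powr \<alpha>) \<longlongrightarrow> det (path 0 t) powr \<alpha>) (at_right 0)"
      using \<open>0 < \<alpha>\<close> by (intro tendsto_powr' tendsto_det) auto
  qed simp_all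
qed

lemma Lambda_concave_det_powr_imp_exponent_le:
  fixes \<alpha> :: real
  assumes "CARD('n) \<ge> 2" "0 < \<alpha>" and conc: "Lambda_concave (\<lambda>A::real^'n^'n. det A powr \<alpha>)"
  shows "\<alpha> * (real CARD('n) - 1) \<le> 1"
proof -
  obtain j :: 'n where True by blast
  define B :: "real^'n^'n" where "B = diag_mat (\<lambda>i. if i = j then 1 else 0)"
  have "B \<in> psd_sym" "mat 1 \<in> psd_sym"
    unfolding B_def mat_1_eq_diag_mat by (auto intro: diag_mat_psd_sym)
  moreover have "det (mat 1 - B) = 0"
  proof -
    have "mat 1 - B = diag_mat (\<lambda>i. if i = j then 0 else 1)"
      by (simp add: B_def diag_mat_def mat_def vec_eq_iff)
    then show ?thesis by (simp add: det_diag_mat)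
  qed
  ultimately have "concave_on {0..1} (\<lambda>t. det ((1 - t) *\<^sub>R B + t *\<^sub>R mat 1) powr \<alpha>)"
    using conc unfolding Lambda_concave_def by blast
  moreover have "det ((1 - t) *\<^sub>R B + t *\<^sub>R mat 1) = t ^ (CARD('n) - 1)" for t :: real
  proof -
    have "(1 - t) *\<^sub>R B + t *\<^sub>R mat 1 = diag_mat (\<lambda>i. if i = j then 1 else t)"
      by (simp add: B_def diag_mat_def mat_def vec_eq_iff)
    then have "det ((1 - t) *\<^sub>R B + t *\<^sub>R mat 1) = (\<Prod>i\<in>UNIV. if i = j then 1 else t)"
      by (simp add: det_diag_mat)
    also have "\<dots> = (\<Prod>i\<in>UNIV - {j}. if i = j then 1 else t)"
      by (subst prod.remove[of UNIV j]) auto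
    also have "\<dots> = (\<Prod>i\<in>UNIV - {j}. t)" by (intro prod.cong) auto
    also have "\<dots> = t ^ (CARD('n) - 1)" by (simp add: card_Diff_singleton)
    finally show ?thesis .
  qed
  ultimately have "concave_on {0..1} (\<lambda>t. (t ^ (CARD('n) - 1)) powr \<alpha>)" by simp
  from concave_onD[OF this, of "1/2" 0 1] \<open>CARD('n) \<ge> 2\<close>
  have "(1 / 2 :: real) \<le> ((1 / 2) ^ (CARD('n) - 1)) powr \<alpha>"
    by (simp add: power_0_left)
  also have "\<dots> = (1 / 2) powr ((real CARD('n) - 1) * \<alpha>)"
    using \<open>CARD('n) \<ge> 2\<close> by (simp add: powr_powr of_nat_diff flip: powr_realpow)
  finally have "2 powr (- 1) \<le> 2 powr (- ((real CARD('n) - 1) * \<alpha>))"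
    by (simp add: powr_minus_divide powr_divide)
  then show ?thesis by (subst (asm) powr_le_cancel_iff) (simp_all add: mult.commute)
qed

theorem proposition1p2:
  fixes \<alpha> :: real
  assumes "CARD('n::finite) \<ge> 2" and "\<alpha> > 0"
  shows "Lambda_concave (\<lambda>A::real^'n^'n. (det A) powr \<alpha>) \<longleftrightarrow> \<alpha> \<le> 1 / (real CARD('n) - 1)"
proof -
  have "0 < real CARD('n) - 1" using assms(1) by simp
  then have "\<alpha> \<le> 1 / (real CARD('n) - 1) \<longleftrightarrow> \<alpha> * (real CARD('n) - 1) \<le> 1"
    by (simp add: pos_le_divide_eq)
  then show ?thesis
    using Lambda_concave_det_powr[OF assms(2)] Lambda_concave_det_powr_imp_exponent_le[OF assms] by blast
qed

end
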